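(* Let $k\ge1$ and let $p_1<p_2<\dots<p_k$ be odd primes, $n=p_1\cdots p_k$. Then $$\prod_{i=1}^{k-2}p_i^{2^{k-i-1}-1}\le \varphi(n)^{2^{k-1}/k-1}.$$
   Context: $\varphi$ is Euler's totient function; an empty product equals $1$. *)

theory Defs
  imports "HOL-Number_Theory.Number_Theory"
begin

end

theory Submission imports Defs begin

(* Taking logarithms, with a i = ln p_i, b j = ln (p_j - 1),
   weights w_i = 2^(k-i-1) - 1 and exponent c = 2^(k-1)/k - 1, the claim becomes
     sum_{i=1}^{k-2} w_i a_i <= c * sum_{j=1}^{k} b_j,
   where both sides carry the same total weight k*c.  Since the p_i are odd primes,
   consecutive ones differ by at least 2, which gives
     2 a_1 <= b_1 + b_k,   a_i <= b_(i+1),   and b increasing.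
   The weight w_1 >= 2c is split as 2c*a_1 (moved onto b_1 + b_k) plus the rest;
   what remains compares the decreasing weights w_i on the increasing b_(i+1) with
   the constant weight c, which follows by Abel summation once every tail sum of
   the w_i is at most the corresponding tail of c's. *)

lemma abel_sum_lower_bound:
  fixes d B :: "nat \<Rightarrow> real"
  assumes "m \<le> n"
    and "\<And>j. m \<le> j \<Longrightarrow> j < n \<Longrightarrow> B j \<le> B (Suc j)"
    and "\<And>t. m < t \<Longrightarrow> t \<le> n \<Longrightarrow> 0 \<le> (\<Sum>j=t..n. d j)"
  shows "(\<Sum>j=m..n. d j) * B m \<le> (\<Sum>j=m..n. d j * B j)"
  using assms
proof (induction "n - m" arbitrary: m)
  case 0
  then show ?case by simp
next
  case (Suc l)
  then have "m < n" by simp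
  have IH: "(\<Sum>j=Suc m..n. d j) * B (Suc m) \<le> (\<Sum>j=Suc m..n. d j * B j)"
    using Suc by simp
  have "(\<Sum>j=Suc m..n. d j) * B m \<le> (\<Sum>j=Suc m..n. d j) * B (Suc m)"
    using Suc.prems \<open>m < n\<close> by (intro mult_left_mono) auto
  with IH \<open>m < n\<close> show ?case
    by (simp add: sum.atLeast_Suc_atMost algebra_simps)
qed

(* Then 2c of the first weight is spent
   on b 1 + b (N+2) (hypothesis ends), every other a i is raised to b (i+1), and the
   resulting comparison of w with c on the increasing b 2, ..., b (N+1) is Abel
   summation applied to e i = c - w i. *)
lemma weighted_log_majorization:
  fixes a b w :: "nat \<Rightarrow> real" and c :: real and N :: nat
  assumes "1 \<le> N"
    and w_nonneg: "\<And>i. 2 \<le> i \<Longrightarrow> i \<le> N \<Longrightarrow> 0 \<le> w i"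
    and c_nonneg: "0 \<le> c"
    and w_first: "2 * c \<le> w 1"
    and w_total: "(\<Sum>i=1..N. w i) = real (N + 2) * c"
    and w_tails: "\<And>s. 2 \<le> s \<Longrightarrow> s \<le> N \<Longrightarrow> (\<Sum>i=s..N. w i) \<le> real (N + 1 - s) * c"
    and ends: "2 * a 1 \<le> b 1 + b (N + 2)"
    and shift: "\<And>i. 1 \<le> i \<Longrightarrow> i \<le> N \<Longrightarrow> a i \<le> b (Suc i)"
    and mono: "\<And>j. 2 \<le> j \<Longrightarrow> j \<le> N \<Longrightarrow> b j \<le> b (Suc j)"
  shows "(\<Sum>i=1..N. w i * a i) \<le> c * (\<Sum>j=1..N+2. b j)"
proof -
  define e where "e i = c - w i" for i
  have e_total: "(\<Sum>i=1..N. e i) = - 2 * c"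
    using w_total \<open>1 \<le> N\<close> by (simp add: e_def sum_subtractf algebra_simps)
  have e_tails: "0 \<le> (\<Sum>i=t..N. e i)" if "1 < t" "t \<le> N" for t
    using w_tails[of t] that by (simp add: e_def sum_subtractf)
  have "(\<Sum>i=1..N. e i) * b 2 \<le> (\<Sum>i=1..N. e i * b (Suc i))"
    using abel_sum_lower_bound[of 1 N "\<lambda>i. b (Suc i)" e] \<open>1 \<le> N\<close> mono e_tails
    by (simp add: numeral_2_eq_2)
  moreover have "(\<Sum>i=1..N. e i * b (Suc i))
      = c * (\<Sum>i=1..N. b (Suc i)) - (\<Sum>i=1..N. w i * b (Suc i))"
    by (simp add: e_def left_diff_distrib sum_subtractf sum_distrib_left)
  ultimately have abel: "(\<Sum>i=1..N. w i * b (Suc i)) \<le> c * (\<Sum>i=1..N. b (Suc i)) + 2 * c * b 2"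
    unfolding e_total by linarith
  have head: "w 1 * a 1 \<le> c * (b 1 + b (N + 2)) + (w 1 - 2 * c) * b 2"
  proof -
    have "w 1 * a 1 = c * (2 * a 1) + (w 1 - 2 * c) * a 1" by (simp add: algebra_simps)
    also have "\<dots> \<le> c * (b 1 + b (N + 2)) + (w 1 - 2 * c) * b 2"
      using ends shift[of 1] \<open>1 \<le> N\<close> c_nonneg w_first
      by (intro add_mono mult_left_mono) (auto simp: numeral_2_eq_2)
    finally show ?thesis .
  qed
  have rest: "(\<Sum>i=2..N. w i * a i) \<le> (\<Sum>i=2..N. w i * b (Suc i))"
    using shift w_nonneg by (intro sum_mono mult_left_mono) auto
  have split_a: "(\<Sum>i=1..N. w i * a i) = w 1 * a 1 + (\<Sum>i=2..N. w i * a i)"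
    and split_b: "(\<Sum>i=1..N. w i * b (Suc i)) = w 1 * b 2 + (\<Sum>i=2..N. w i * b (Suc i))"
    using \<open>1 \<le> N\<close> by (simp_all add: sum.atLeast_Suc_atMost numeral_2_eq_2)
  have split_c: "(\<Sum>j=1..N+2. b j) = b 1 + (\<Sum>i=1..N. b (Suc i)) + b (N + 2)"
    using sum.shift_bounds_cl_Suc_ivl[of b 1 N, symmetric]
    by (simp add: sum.atLeast_Suc_atMost sum.cl_ivl_Suc numeral_2_eq_2)
  show ?thesis
    using head rest abel unfolding split_a split_b split_c by (simp add: algebra_simps)
qed

definition weight :: "nat \<Rightarrow> nat \<Rightarrow> real" where
  "weight k i = 2 ^ (k - i - 1) - 1"

definition log_exponent :: "nat \<Rightarrow> real" where
  "log_exponent k = 2 ^ (k - 1) / real k - 1"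

lemma geometric_tail_sum: "(\<Sum>i=s..s+m. (2::real) ^ (s + m + 1 - i)) = 2 ^ (m + 2) - 2"
proof (induction m)
  case 0
  then show ?case by simp
next
  case (Suc m)
  have "(\<Sum>i=s..s+m. (2::real) ^ (s + Suc m + 1 - i)) = 2 * (\<Sum>i=s..s+m. 2 ^ (s + m + 1 - i))"
    by (simp add: sum_distrib_left Suc_diff_le)
  then show ?case using Suc by simp
qed

lemma weight_tail_sum:
  assumes "s + 2 \<le> k"
  shows "(\<Sum>i=s..k-2. weight k i) = 2 ^ (k - s) - 2 - real (k - 1 - s)"
proof -
  define m where "m = k - 2 - s"
  have k: "k - 2 = s + m" "k - s = m + 2" "k - 1 - s = m + 1"
    using assms by (auto simp: m_def)
  have "(\<Sum>i=s..k-2. weight k i) = (\<Sum>i=s..s+m. (2::real) ^ (s + m + 1 - i)) - real (m + 1)"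
    unfolding k(1) weight_def sum_subtractf using assms
    by (auto intro!: sum.cong arg_cong[where f = "(^) 2"] simp: m_def)
  then show ?thesis unfolding k geometric_tail_sum by simp
qed

lemma pow2_tail_bound:
  fixes m k :: nat
  assumes "1 \<le> m" "m + 3 \<le> k"
  shows "real k * (2 ^ (m + 1) - 2) \<le> real m * 2 ^ (k - 1)"
  using assms(2)
proof (induction k rule: nat_induct_at_least)
  case base
  have "(3 - real m) * 2 ^ m \<le> real m + 3"
  proof -
    consider "m = 1" | "m = 2" | "3 \<le> m" using assms(1) by linarith
    then show ?thesis
    proof cases
      case 3
      then have "(3 - real m) * 2 ^ m \<le> 0" by (intro mult_nonpos_nonneg) auto
      then show ?thesis by simp
    qed auto
  qed
  then show ?case by (simp add: algebra_simps)
next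
  case (Suc k)
  have "(2::real) \<le> 2 ^ (m + 1)" using power_increasing[of 1 "m + 1" "2::real"] by simp
  then have "real (Suc k) * (2 ^ (m + 1) - 2) \<le> (2 * real k) * (2 ^ (m + 1) - 2)"
    using Suc.hyps by (intro mult_right_mono) auto
  also have "\<dots> = 2 * (real k * (2 ^ (m + 1) - 2))" by simp
  also have "\<dots> \<le> real m * 2 ^ (Suc k - 1)"
    using Suc.IH Suc.hyps by (cases k) auto
  finally show ?case .
qed

(* c >= 0, since k <= 2^(k-1). *)
lemma log_exponent_nonneg:
  assumes "1 \<le> k"
  shows "0 \<le> log_exponent k"
proof -
  have "k \<le> 2 ^ (k - 1)" using less_exp[of "k - 1"] assms by linarith
  then have "real k \<le> 2 ^ (k - 1)" by (metis of_nat_le_iff of_nat_numeral of_nat_power)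
  then show ?thesis using assms by (simp add: log_exponent_def field_simps)
qed

lemma weight_total: "3 \<le> k \<Longrightarrow> (\<Sum>i=1..k-2. weight k i) = real k * log_exponent k"
  by (simp add: weight_tail_sum log_exponent_def field_simps of_nat_diff)

lemma weight_tails:
  assumes "2 \<le> s" "s + 2 \<le> k"
  shows "(\<Sum>i=s..k-2. weight k i) \<le> real (k - 1 - s) * log_exponent k"
proof -
  define m where "m = k - 1 - s"
  have k_s: "k - s = m + 1" using assms by (simp add: m_def)
  have "real k * (2 ^ (m + 1) - 2) \<le> real m * 2 ^ (k - 1)"
    using assms by (intro pow2_tail_bound) (auto simp: m_def)
  then show ?thesis
    using assms unfolding weight_tail_sum[OF assms(2)] k_s m_def[symmetric] log_exponent_def
    by (simp add: field_simps)
qed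

(* The largest weight w_1 can pay for the 2c that is moved onto b_1 + b_k. *)
lemma weight_first:
  assumes "3 \<le> k"
  shows "2 * log_exponent k \<le> weight k 1"
proof -
  obtain j where k: "k = j + 3" using assms by (metis add.commute le_Suc_ex)
  have "(1 - real j) * 2 ^ (j + 1) \<le> real j + 3"
  proof (cases "j = 0")
    case False
    then have "(1 - real j) * 2 ^ (j + 1) \<le> 0" by (intro mult_nonpos_nonneg) auto
    then show ?thesis by simp
  qed simp
  then show ?thesis
    by (simp add: k weight_def log_exponent_def field_simps)
qed

lemma of_nat_exponent_eq_weight: "real (2 ^ (k - i - 1) - 1 :: nat) = weight k i"
  by (simp add: weight_def of_nat_diff)

(* The key estimate 2 ln p_1 <= ln (p_1 - 1) + ln (p_k - 1), valid once p_k >= p_1 + 4,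
   because p_1^2 <= (p_1 - 1) (p_1 + 3). *)
lemma two_ln_le_ln_pred_sum:
  fixes x y :: real
  assumes "2 \<le> x" "x + 4 \<le> y"
  shows "2 * ln x \<le> ln (x - 1) + ln (y - 1)"
proof -
  have "x ^ 2 \<le> (x - 1) * (x + 3)" using assms(1) by (simp add: algebra_simps power2_eq_square)
  also have "\<dots> \<le> (x - 1) * (y - 1)" using assms by (intro mult_left_mono) auto
  finally have "ln (x ^ 2) \<le> ln ((x - 1) * (y - 1))" using assms(1) by (intro ln_mono) auto
  then show ?thesis using assms by (simp add: ln_mult ln_realpow)
qed

lemma gapped_log_inequality:
  fixes q :: "nat \<Rightarrow> real" and k :: nat
  assumes "1 \<le> k"
    and ge3: "\<And>i. i \<in> {1..k} \<Longrightarrow> 3 \<le> q i"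
    and gap: "\<And>i j. i \<in> {1..k} \<Longrightarrow> j \<in> {1..k} \<Longrightarrow> i < j \<Longrightarrow> q i + 2 \<le> q j"
  shows "(\<Sum>i=1..k-2. weight k i * ln (q i)) \<le> log_exponent k * (\<Sum>j=1..k. ln (q j - 1))"
proof (cases "k \<le> 2")
  case True
  then have "k = 1 \<or> k = 2" using assms(1) by linarith
  then have "log_exponent k = 0" by (auto simp: log_exponent_def)
  with True show ?thesis by simp
next
  case False
  define N where "N = k - 2"
  have "3 \<le> k" and k: "k = N + 2" and "1 \<le> N" using False by (auto simp: N_def)
  have succ_gap: "q i + 2 \<le> q (Suc i)" if "1 \<le> i" "i < k" for i
    using gap[of i "Suc i"] that by simp
  have "(\<Sum>i=1..N. weight k i * ln (q i)) \<le> log_exponent k * (\<Sum>j=1..N+2. ln (q j - 1))"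
  proof (rule weighted_log_majorization)
    show "2 * ln (q 1) \<le> ln (q 1 - 1) + ln (q (N + 2) - 1)"
      using ge3[of 1] gap[of 1 2] gap[of 2 "N + 2"] \<open>1 \<le> N\<close> k
      by (intro two_ln_le_ln_pred_sum) auto
    show "ln (q i) \<le> ln (q (Suc i) - 1)" if "1 \<le> i" "i \<le> N" for i
      using ge3[of i] succ_gap[of i] that k by simp
    show "ln (q j - 1) \<le> ln (q (Suc j) - 1)" if "2 \<le> j" "j \<le> N" for j
      using ge3[of j] succ_gap[of j] that k by simp
    show "(\<Sum>i=1..N. weight k i) = real (N + 2) * log_exponent k"
      using weight_total[OF \<open>3 \<le> k\<close>] k by simp
    show "(\<Sum>i=s..N. weight k i) \<le> real (N + 1 - s) * log_exponent k"
      if "2 \<le> s" "s \<le> N" for s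
      using weight_tails[of s k] that k by simp
    show "2 * log_exponent k \<le> weight k 1"
      by (rule weight_first[OF \<open>3 \<le> k\<close>])
    show "0 \<le> log_exponent k" using assms(1) by (rule log_exponent_nonneg)
    show "0 \<le> weight k i" for i by (simp add: weight_def)
  qed fact
  then show ?thesis using k by simp
qed

lemma prod_power_le_powr_of_ln:
  fixes x y :: "'a \<Rightarrow> real" and e :: "'a \<Rightarrow> nat"
  assumes "finite I" "finite J"
    and "\<And>i. i \<in> I \<Longrightarrow> 0 < x i" "\<And>j. j \<in> J \<Longrightarrow> 0 < y j"
    and "(\<Sum>i\<in>I. real (e i) * ln (x i)) \<le> c * (\<Sum>j\<in>J. ln (y j))"
  shows "(\<Prod>i\<in>I. x i ^ e i) \<le> (\<Prod>j\<in>J. y j) powr c"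
proof -
  have "(\<Prod>i\<in>I. x i ^ e i) = (\<Prod>i\<in>I. exp (real (e i) * ln (x i)))"
    using assms(3) by (intro prod.cong) (auto simp: exp_of_nat_mult)
  also have "\<dots> = exp (\<Sum>i\<in>I. real (e i) * ln (x i))" using assms(1) by (simp add: exp_sum)
  also have "\<dots> \<le> exp (c * (\<Sum>j\<in>J. ln (y j)))" using assms(5) by simp
  also have "\<dots> = (\<Prod>j\<in>J. y j) powr c"
    using assms(2,4) by (simp add: powr_def ln_prod prod_pos less_imp_neq[symmetric])
  finally show ?thesis .
qed

lemma totient_prod_distinct_primes:
  assumes "inj_on p A" "\<And>i. i \<in> A \<Longrightarrow> prime (p i)"
  shows "totient (\<Prod>i\<in>A. p i) = (\<Prod>i\<in>A. p i - 1)"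
proof -
  have "pairwise coprime (p ` A)"
    using assms(2) by (auto simp: pairwise_def primes_coprime)
  then show ?thesis using assms by (simp add: totient_prod_coprime totient_prime)
qed

theorem theorem4:
  fixes k :: nat and p :: "nat \<Rightarrow> nat" and n :: nat
  assumes "k \<ge> 1"
    and "\<And>i. i \<in> {1..k} \<Longrightarrow> prime (p i) \<and> odd (p i)"
    and "\<And>i j. i \<in> {1..k} \<Longrightarrow> j \<in> {1..k} \<Longrightarrow> i < j \<Longrightarrow> p i < p j"
    and "n = (\<Prod>i=1..k. p i)"
  shows "real (\<Prod>i=1..k-2. p i ^ (2 ^ (k - i - 1) - 1))
           \<le> real (totient n) powr (2 ^ (k - 1) / real k - 1)"
proof -
  have ge3: "3 \<le> real (p i)" if "i \<in> {1..k}" for i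
    using assms(2)[OF that] prime_ge_2_nat[of "p i"] by (cases "p i = 2") auto
  have gap: "real (p i) + 2 \<le> real (p j)" if "i \<in> {1..k}" "j \<in> {1..k}" "i < j" for i j
    using assms(2)[OF that(1)] assms(2)[OF that(2)] assms(3)[OF that] by (auto elim!: oddE)
  have "inj_on p {1..k}"
    by (rule inj_onI) (metis assms(3) less_irrefl linorder_neqE_nat)
  then have totient_n: "totient n = (\<Prod>j=1..k. p j - 1)"
    unfolding assms(4) using assms(2) by (intro totient_prod_distinct_primes) auto
  have totient_real: "real (totient n) = (\<Prod>j=1..k. real (p j) - 1)"
    unfolding totient_n of_nat_prod
    by (intro prod.cong refl) (use ge3 in \<open>force simp: of_nat_diff\<close>)
  have "(\<Sum>i=1..k-2. real (2 ^ (k - i - 1) - 1) * ln (real (p i)))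
      \<le> log_exponent k * (\<Sum>j=1..k. ln (real (p j) - 1))"
    unfolding of_nat_exponent_eq_weight using assms(1) ge3 gap by (intro gapped_log_inequality)
  then have "(\<Prod>i=1..k-2. real (p i) ^ (2 ^ (k - i - 1) - 1))
      \<le> (\<Prod>j=1..k. real (p j) - 1) powr log_exponent k"
    by (intro prod_power_le_powr_of_ln) (use ge3 in \<open>force+\<close>)
  then show ?thesis by (simp add: totient_real log_exponent_def)
qed

end
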